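(* Suppose Assumption (A-1) below holds. Let $S_n=-\frac{2}{n(n-1)}X^\top\xi$, where $\xi=2r-(n+1)e_n$ and $r$ is uniformly distributed over all permutations of $(1,\dots,n)$. Then for every $t>0$, $$\Pr\big(\Psi^d(S_n)\ge t\big)\le 2p\exp\Big(-\frac{nt^2}{32 b_1^2c_p^2}\Big).$$
   Context: $X\in\mathbb{R}^{n\times p}$ has rows $X_1^\top,\dots,X_n^\top$, $n\ge2$; $\beta^*\in\mathbb{R}^p$ is fixed. $[p]$ is partitioned into nonempty disjoint groups $\mathcal{G}_1,\dots,\mathcal{G}_g$ with weights $w_l>0$; $\Psi(\beta)=\sum_lw_l\|\beta_{\mathcal{G}_l}\|_2$, $\Psi^d(v)=\max_l\|v_{\mathcal{G}_l}\|_2/w_l$, $c_p=\max_lw_l^{-1}\sqrt{|\mathcal{G}_l|}$. $\mathcal{A}_0=\{l:\mathcal{G}_l\cap\{j:\beta^*_j\neq0\}\neq\emptyset\}$, $\Omega=\bigcup_{l\in\mathcal{A}_0}\mathcal{G}_l$, $\bar\Omega=[p]\setminus\Omega$, $\Psi_\Omega(\gamma)=\Psi(\mathcal{P}_\Omega\gamma)$, $\Psi_{\bar\Omega}(\gamma)=\Psi(\mathcal{P}_{\bar\Omega}\gamma)$ ($\mathcal{P}_\Omega$ zeroes coordinates outside $\Omega$). For a given $c_0>1$, $\bar c=1+\frac{c_0+1}{c_0-1}$. (A-1) $\sum_iX_i=0$; $|X_{ij}|\le b_1$ for all $i,j$, for a constant $b_1>0$; and there is $b_2>0$ with $\gamma^\top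 X^\top X\gamma/(n\|\gamma\|_2^2)\ge b_2$ for all nonzero $\gamma$ with $\Psi_{\bar\Omega}(\gamma)\le(\bar c-1)\Psi_\Omega(\gamma)$. *)

theory Defs
  imports "HOL-Probability.Probability" "HOL-Combinatorics.Permutations"
begin

(* Vectors in R^p are functions nat => real, only indices < p matter.
   Groups: G :: nat => nat set, indexed by l < g (0-based). *)

definition gnorm :: "nat set \<Rightarrow> (nat \<Rightarrow> real) \<Rightarrow> real" where
  "gnorm A v = sqrt (\<Sum>j\<in>A. (v j)\<^sup>2)"

definition Psi :: "nat \<Rightarrow> (nat \<Rightarrow> nat set) \<Rightarrow> (nat \<Rightarrow> real) \<Rightarrow> (nat \<Rightarrow> real) \<Rightarrow> real" where
  "Psi g G w \<beta> = (\<Sum>l<g. w l * gnorm (G l) \<beta>)"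

definition Psi_dual :: "nat \<Rightarrow> (nat \<Rightarrow> nat set) \<Rightarrow> (nat \<Rightarrow> real) \<Rightarrow> (nat \<Rightarrow> real) \<Rightarrow> real" where
  "Psi_dual g G w v = Max ((\<lambda>l. gnorm (G l) v / w l) ` {..<g})"

definition c_p :: "nat \<Rightarrow> (nat \<Rightarrow> nat set) \<Rightarrow> (nat \<Rightarrow> real) \<Rightarrow> real" where
  "c_p g G w = Max ((\<lambda>l. sqrt (real (card (G l))) / w l) ` {..<g})"

definition proj :: "nat set \<Rightarrow> (nat \<Rightarrow> real) \<Rightarrow> (nat \<Rightarrow> real)" where
  "proj A \<gamma> = (\<lambda>j. if j \<in> A then \<gamma> j else 0)"

definition active_groups :: "nat \<Rightarrow> (nat \<Rightarrow> nat set) \<Rightarrow> nat \<Rightarrow> (nat \<Rightarrow> real) \<Rightarrow> nat set" where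
  "active_groups g G p \<beta>s = {l. l < g \<and> G l \<inter> {j. j < p \<and> \<beta>s j \<noteq> 0} \<noteq> {}}"

definition Omega :: "nat \<Rightarrow> (nat \<Rightarrow> nat set) \<Rightarrow> nat \<Rightarrow> (nat \<Rightarrow> real) \<Rightarrow> nat set" where
  "Omega g G p \<beta>s = (\<Union>l\<in>active_groups g G p \<beta>s. G l)"

definition cbar :: "real \<Rightarrow> real" where
  "cbar c0 = 1 + (c0 + 1) / (c0 - 1)"

(* S_n for the permutation sigma of {0..<n}: r_i = sigma i + 1, xi_i = 2 r_i - (n+1),
   S_n = -2/(n(n-1)) X^T xi *)
definition S_n :: "nat \<Rightarrow> (nat \<Rightarrow> nat \<Rightarrow> real) \<Rightarrow> (nat \<Rightarrow> nat) \<Rightarrow> (nat \<Rightarrow> real)" where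
  "S_n n X \<sigma> = (\<lambda>j. - 2 / (real n * (real n - 1)) *
      (\<Sum>i<n. X i j * (2 * real (\<sigma> i + 1) - (real n + 1))))"

definition assumption_A1 ::
  "nat \<Rightarrow> nat \<Rightarrow> (nat \<Rightarrow> nat \<Rightarrow> real) \<Rightarrow> nat \<Rightarrow> (nat \<Rightarrow> nat set) \<Rightarrow> (nat \<Rightarrow> real)
   \<Rightarrow> (nat \<Rightarrow> real) \<Rightarrow> real \<Rightarrow> real \<Rightarrow> bool" where
  "assumption_A1 n p X g G w \<beta>s c0 b1 \<longleftrightarrow>
     (\<forall>j<p. (\<Sum>i<n. X i j) = 0) \<and>
     b1 > 0 \<and> (\<forall>i<n. \<forall>j<p. \<bar>X i j\<bar> \<le> b1) \<and>
     (\<exists>b2>0. \<forall>\<gamma>::nat \<Rightarrow> real.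
        (\<exists>j<p. \<gamma> j \<noteq> 0) \<and>
        Psi g G w (proj ({..<p} - Omega g G p \<beta>s) \<gamma>)
          \<le> (cbar c0 - 1) * Psi g G w (proj (Omega g G p \<beta>s) \<gamma>) \<longrightarrow>
        (\<Sum>i<n. (\<Sum>j<p. X i j * \<gamma> j)\<^sup>2) / (real n * (\<Sum>j<p. (\<gamma> j)\<^sup>2)) \<ge> b2)"

end

theory Submission
  imports Defs
begin

(*
  Each coordinate of S_n is, up to the factor -2/(n(n-1)), a linear rank statistic
  T = \<Sum>i. X i j * c (\<sigma> i) of a uniform random permutation \<sigma>, with a centred column and
  scores c k = 2(k+1) - (n+1) of oscillation D = 2(n-1).  Its moment generating function satisfies
  E exp(l T) \<le> exp(n (l b1 D)\<^sup>2 / 2), by induction on the permuted set: fixing the image b of one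
  point x leaves a uniform permutation of the other points, to which the induction hypothesis
  applies, and the resulting average over b is controlled by Hoeffding's lemma.  A Chernoff bound
  and a union bound over the sign and the p coordinates, combined with
  Psi_dual v \<le> c_p * max_j |v j|, give the claim.
*)

lemma Hoeffding_sum_exp_deviation_le:
  fixes y :: "'a \<Rightarrow> real"
  assumes B: "finite B" "B \<noteq> {}" and l: "l > 0"
    and osc: "\<And>b b'. b \<in> B \<Longrightarrow> b' \<in> B \<Longrightarrow> y b - y b' \<le> W"
  shows "(\<Sum>b\<in>B. exp (l * (y b - (\<Sum>b'\<in>B. y b') / card B))) \<le> card B * exp (l\<^sup>2 * W\<^sup>2 / 8)"
proof -
  define lo where "lo = Min (y ` B)"
  have "y b \<in> {lo..lo + W}" if "b \<in> B" for b
  proof -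
    have "lo \<in> y ` B" using B by (simp add: lo_def)
    then obtain b' where "b' \<in> B" "lo = y b'" by blast
    moreover have "lo \<le> y b" using B that by (simp add: lo_def)
    ultimately show ?thesis using osc[OF that \<open>b' \<in> B\<close>] by auto
  qed
  then interpret interval_bounded_random_variable "measure_pmf (pmf_of_set B)" y lo "lo + W"
    by unfold_locales (use B in \<open>auto simp: AE_measure_pmf_iff\<close>)
  have "ennreal (measure_pmf.expectation (pmf_of_set B)
          (\<lambda>b. exp (l * (y b - measure_pmf.expectation (pmf_of_set B) y))))
      \<le> ennreal (exp (l\<^sup>2 * W\<^sup>2 / 8))"
    using Hoeffdings_lemma_nn_integral[OF l] B
    by (subst nn_integral_eq_integral[symmetric])
      (auto intro!: integrable_measure_pmf_finite simp: set_pmf_of_set[OF B(2,1)])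
  then have "(\<Sum>b\<in>B. exp (l * (y b - (\<Sum>b'\<in>B. y b') / card B))) / card B \<le> exp (l\<^sup>2 * W\<^sup>2 / 8)"
    using B by (simp add: integral_pmf_of_set)
  then show ?thesis
    using B by (simp add: divide_le_eq card_gt_0_iff mult.commute)
qed

lemma sum_comp_transpose_insert:
  fixes c :: "'a \<Rightarrow> real"
  assumes S: "finite S" "x \<notin> S" and b: "b \<in> insert x S"
  shows "(\<Sum>k\<in>S. c (Transposition.transpose x b k)) = (\<Sum>k\<in>insert x S. c k) - c b"
proof -
  have "Transposition.transpose x b permutes insert x S"
    using b by (intro permutes_swap_id) auto
  then have "(\<Sum>k\<in>insert x S. c (Transposition.transpose x b k)) = (\<Sum>k\<in>insert x S. c k)"
    by (rule sum.reindex_bij_betw[OF permutes_imp_bij])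
  then show ?thesis
    using S by simp
qed

lemma centered_decomposition:
  fixes m ax cb r C :: real
  assumes "m + 1 \<noteq> 0"
  shows "ax * cb + r * (C - cb) = (r * m + ax) * (C / (m + 1)) + (ax - r) * (cb - C / (m + 1))"
proof -
  define q where "q = C / (m + 1)"
  have C: "C = q * (m + 1)"
    using assms by (simp add: q_def)
  show ?thesis
    unfolding q_def[symmetric] by (simp only: C) algebra
qed

lemma sum_permutes_exp_transpose_eq:
  fixes a c :: "'a \<Rightarrow> real"
  assumes "finite S" "x \<notin> S"
  shows "(\<Sum>q | q permutes S. exp (l * (\<Sum>i\<in>insert x S. a i * c ((Transposition.transpose x b \<circ> q) i))))
    = exp (l * (a x * c b)) * (\<Sum>q | q permutes S. exp (l * (\<Sum>i\<in>S. a i * c (Transposition.transpose x b (q i)))))"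
proof -
  have "(\<Sum>i\<in>insert x S. a i * c ((Transposition.transpose x b \<circ> q) i))
      = a x * c b + (\<Sum>i\<in>S. a i * c (Transposition.transpose x b (q i)))" if "q permutes S" for q
    using that assms by (simp add: permutes_not_in)
  then show ?thesis
    by (simp add: sum_distrib_left distrib_left exp_add)
qed

(*
  Once q x = b is fixed, the induction hypothesis leaves the exponent ax * c b + r * (sum c B - c b),
  where r is the mean weight of the remaining points.  It is a constant plus (ax - r) times the
  centred score c b, so Hoeffding's lemma bounds its average over b.
*)
lemma sum_exp_conditional_mean_le:
  fixes c :: "'a \<Rightarrow> real" and ax r l b1 D :: real
  assumes B: "finite B" "B \<noteq> {}" and l: "l > 0" and "\<bar>ax\<bar> \<le> b1" "\<bar>r\<bar> \<le> b1"
    and osc: "\<forall>b\<in>B. \<forall>b'\<in>B. \<bar>c b - c b'\<bar> \<le> D"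
  shows "(\<Sum>b\<in>B. exp (l * (ax * c b + r * (sum c B - c b))))
    \<le> card B * exp (l * (r * (real (card B) - 1) + ax) * sum c B / card B + (l * b1 * D)\<^sup>2 / 2)"
proof -
  define \<alpha> where "\<alpha> = ax - r"
  define k where "k = real (card B)"
  define \<mu> where "\<mu> = (r * (k - 1) + ax) * (sum c B / k)"
  have k: "k > 0"
    using B by (simp add: k_def card_gt_0_iff)
  have \<alpha>_bound: "\<bar>\<alpha>\<bar> \<le> 2 * b1"
    using assms abs_triangle_ineq4[of ax r] by (simp add: \<alpha>_def)
  have "\<alpha> * c b - \<alpha> * c b' \<le> 2 * b1 * D" if "b \<in> B" "b' \<in> B" for b b'
  proof -
    have "\<alpha> * c b - \<alpha> * c b' \<le> \<bar>\<alpha>\<bar> * \<bar>c b - c b'\<bar>"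
      by (metis abs_ge_self abs_mult right_diff_distrib)
    also have "\<dots> \<le> 2 * b1 * D"
      using \<alpha>_bound osc that by (intro mult_mono) auto
    finally show ?thesis .
  qed
  then have Hoeffding: "(\<Sum>b\<in>B. exp (l * (\<alpha> * c b - (\<Sum>b'\<in>B. \<alpha> * c b') / k))) \<le> k * exp ((l * b1 * D)\<^sup>2 / 2)"
    using Hoeffding_sum_exp_deviation_le[of B l "\<lambda>b. \<alpha> * c b" "2 * b1 * D"] B l
    by (simp add: k_def power_mult_distrib mult_ac)
  have mean: "(\<Sum>b'\<in>B. \<alpha> * c b') / k = \<alpha> * (sum c B / k)"
    by (simp add: sum_distrib_left[symmetric])
  have "ax * c b + r * (sum c B - c b) = \<mu> + (\<alpha> * c b - (\<Sum>b'\<in>B. \<alpha> * c b') / k)" for b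
    unfolding mean using centered_decomposition[of "k - 1" ax "c b" r "sum c B"] k
    by (simp add: \<mu>_def \<alpha>_def algebra_simps)
  then have "(\<Sum>b\<in>B. exp (l * (ax * c b + r * (sum c B - c b))))
      = exp (l * \<mu>) * (\<Sum>b\<in>B. exp (l * (\<alpha> * c b - (\<Sum>b'\<in>B. \<alpha> * c b') / k)))"
    by (simp only: distrib_left exp_add sum_distrib_left)
  also have "\<dots> \<le> exp (l * \<mu>) * (k * exp ((l * b1 * D)\<^sup>2 / 2))"
    using Hoeffding by (rule mult_left_mono) simp
  finally show ?thesis
    by (simp add: \<mu>_def k_def exp_add mult_ac)
qed

lemma sum_permutes_exp_le:
  fixes a c :: "'a \<Rightarrow> real" and l b1 D :: real
  assumes "finite S" and "l > 0"
    and "\<forall>i\<in>S. \<bar>a i\<bar> \<le> b1" and "\<forall>k\<in>S. \<forall>k'\<in>S. \<bar>c k - c k'\<bar> \<le> D"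
  shows "(\<Sum>q | q permutes S. exp (l * (\<Sum>i\<in>S. a i * c (q i))))
    \<le> fact (card S) * exp (l * (\<Sum>i\<in>S. a i) * (\<Sum>i\<in>S. c i) / card S + card S * ((l * b1 * D)\<^sup>2 / 2))"
  using assms
proof (induction S arbitrary: c rule: finite_induct)
  case empty
  then show ?case by simp
next
  case (insert x S c)
  define m where "m = card S"
  define A where "A = (\<Sum>i\<in>S. a i)"
  define C where "C = (\<Sum>i\<in>insert x S. c i)"
  define K where "K = (l * b1 * D)\<^sup>2 / 2"
  have card: "card (insert x S) = m + 1"
    using insert.hyps by (simp add: m_def)
  have step: "(\<Sum>q | q permutes S. exp (l * (\<Sum>i\<in>insert x S. a i * c ((Transposition.transpose x b \<circ> q) i))))
      \<le> fact m * exp (m * K) * exp (l * (a x * c b + A / m * (C - c b)))"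
    if b: "b \<in> insert x S" for b
  proof -
    define c' where "c' = c \<circ> Transposition.transpose x b"
    have "Transposition.transpose x b k \<in> insert x S" if "k \<in> S" for k
      using that b by (auto simp: Transposition.transpose_def)
    then have "\<forall>k\<in>S. \<forall>k'\<in>S. \<bar>c' k - c' k'\<bar> \<le> D"
      using insert.prems(3) unfolding c'_def comp_def by blast
    moreover have "(\<Sum>k\<in>S. c' k) = C - c b"
      using sum_comp_transpose_insert[OF insert.hyps b] by (simp add: c'_def C_def)
    ultimately have IH: "(\<Sum>q | q permutes S. exp (l * (\<Sum>i\<in>S. a i * c' (q i))))
        \<le> fact m * exp (l * A * (C - c b) / m + m * K)"
      using insert.IH[of c'] insert.prems by (simp add: m_def A_def K_def)
    have "exp (l * (a x * c b)) * (\<Sum>q | q permutes S. exp (l * (\<Sum>i\<in>S. a i * c' (q i))))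
        \<le> exp (l * (a x * c b)) * (fact m * exp (l * A * (C - c b) / m + m * K))"
      using IH by (rule mult_left_mono) simp
    then show ?thesis
      unfolding sum_permutes_exp_transpose_eq[OF insert.hyps]
      by (simp add: c'_def exp_add[symmetric] algebra_simps)
  qed
  have "\<bar>A\<bar> \<le> (\<Sum>i\<in>S. \<bar>a i\<bar>)"
    unfolding A_def by (rule sum_abs)
  also have "\<dots> \<le> m * b1"
    using sum_mono[of S "\<lambda>i. \<bar>a i\<bar>" "\<lambda>_. b1"] insert.prems(2) by (simp add: m_def)
  finally have "\<bar>A / m\<bar> \<le> b1"
    using insert.prems(2) by (cases "m = 0") (auto simp: field_simps)
  moreover have "A / m * m = A"
    using insert.hyps by (cases "m = 0") (simp_all add: A_def m_def)
  ultimately have conditional: "(\<Sum>b\<in>insert x S. exp (l * (a x * c b + A / m * (C - c b))))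
      \<le> (m + 1) * exp (l * (A + a x) * C / (m + 1) + K)"
    using sum_exp_conditional_mean_le[of "insert x S" l "a x" b1 "A / m" c D] insert card
    by (simp add: C_def K_def)
  have "(\<Sum>q | q permutes insert x S. exp (l * (\<Sum>i\<in>insert x S. a i * c (q i))))
      = (\<Sum>b\<in>insert x S. \<Sum>q | q permutes S. exp (l * (\<Sum>i\<in>insert x S. a i * c ((Transposition.transpose x b \<circ> q) i))))"
    by (rule sum_over_permutations_insert[OF insert.hyps])
  also have "\<dots> \<le> (\<Sum>b\<in>insert x S. fact m * exp (m * K) * exp (l * (a x * c b + A / m * (C - c b))))"
    by (intro sum_mono step)
  also have "\<dots> = fact m * exp (m * K) * (\<Sum>b\<in>insert x S. exp (l * (a x * c b + A / m * (C - c b))))"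
    by (rule sum_distrib_left[symmetric])
  also have "\<dots> \<le> fact m * exp (m * K) * ((m + 1) * exp (l * (A + a x) * C / (m + 1) + K))"
    using conditional by (rule mult_left_mono) simp
  also have "\<dots> = fact (m + 1) * exp (l * (A + a x) * C / (m + 1) + (m + 1) * K)"
    by (simp add: exp_add algebra_simps)
  finally show ?case
    using insert.hyps card by (simp add: A_def C_def K_def add.commute)
qed

lemma prob_pmf_of_set_ge_le_sum_exp:
  fixes T :: "'a \<Rightarrow> real"
  assumes P: "finite P" "P \<noteq> {}" and l: "l \<ge> 0"
  shows "measure_pmf.prob (pmf_of_set P) {\<sigma>. u \<le> T \<sigma>} \<le> (\<Sum>\<sigma>\<in>P. exp (l * T \<sigma>)) / (card P * exp (l * u))"
proof -
  define E where "E = P \<inter> {\<sigma>. u \<le> T \<sigma>}"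
  have "card E * exp (l * u) = (\<Sum>\<sigma>\<in>E. exp (l * u))"
    by simp
  also have "\<dots> \<le> (\<Sum>\<sigma>\<in>E. exp (l * T \<sigma>))"
    using l by (intro sum_mono) (auto simp: E_def intro: mult_left_mono)
  also have "\<dots> \<le> (\<Sum>\<sigma>\<in>P. exp (l * T \<sigma>))"
    using P by (intro sum_mono2) (auto simp: E_def)
  finally have "card E / card P \<le> (\<Sum>\<sigma>\<in>P. exp (l * T \<sigma>)) / exp (l * u) / card P"
    by (intro divide_right_mono) (simp_all add: field_simps)
  then show ?thesis
    using P by (simp add: measure_pmf_of_set E_def mult.commute)
qed

lemma prob_permutes_sum_ge_le:
  fixes a c :: "'a \<Rightarrow> real" and b1 D u :: real
  assumes S: "finite S" "S \<noteq> {}" and a: "(\<Sum>i\<in>S. a i) = 0" "\<forall>i\<in>S. \<bar>a i\<bar> \<le> b1"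
    and c: "\<forall>k\<in>S. \<forall>k'\<in>S. \<bar>c k - c k'\<bar> \<le> D" and pos: "b1 > 0" "D > 0" "u > 0"
  shows "measure_pmf.prob (pmf_of_set {\<sigma>. \<sigma> permutes S}) {\<sigma>. u \<le> (\<Sum>i\<in>S. a i * c (\<sigma> i))}
    \<le> exp (- u\<^sup>2 / (2 * real (card S) * b1\<^sup>2 * D\<^sup>2))"
proof -
  define m where "m = real (card S)"
  define l where "l = u / (m * (b1 * D)\<^sup>2)"
  have m: "m > 0"
    using S by (simp add: m_def card_gt_0_iff)
  have l: "l > 0"
    using m pos by (simp add: l_def)
  have perms: "finite {\<sigma>. \<sigma> permutes S}" "{\<sigma>. \<sigma> permutes S} \<noteq> {}" "card {\<sigma>. \<sigma> permutes S} = fact (card S)"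
    using S by (auto simp: finite_permutations card_permutations intro: permutes_id)
  have "measure_pmf.prob (pmf_of_set {\<sigma>. \<sigma> permutes S}) {\<sigma>. u \<le> (\<Sum>i\<in>S. a i * c (\<sigma> i))}
      \<le> (\<Sum>\<sigma> | \<sigma> permutes S. exp (l * (\<Sum>i\<in>S. a i * c (\<sigma> i)))) / (fact (card S) * exp (l * u))"
    using prob_pmf_of_set_ge_le_sum_exp[OF perms(1,2)] l perms(3) by simp
  also have "\<dots> \<le> fact (card S) * exp (m * ((l * b1 * D)\<^sup>2 / 2)) / (fact (card S) * exp (l * u))"
    using sum_permutes_exp_le[OF S(1) l a(2) c] a(1) by (intro divide_right_mono) (simp_all add: m_def)
  also have "\<dots> = exp (m * ((l * b1 * D)\<^sup>2 / 2) - l * u)"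
    by (simp add: exp_diff)
  also have "m * ((l * b1 * D)\<^sup>2 / 2) - l * u = - u\<^sup>2 / (2 * m * b1\<^sup>2 * D\<^sup>2)"
    using m pos by (simp add: l_def power2_eq_square field_simps)
  finally show ?thesis
    by (simp add: m_def)
qed

lemma prob_permutes_abs_sum_ge_le:
  fixes a c :: "'a \<Rightarrow> real" and b1 D u :: real
  assumes S: "finite S" "S \<noteq> {}" and a: "(\<Sum>i\<in>S. a i) = 0" "\<forall>i\<in>S. \<bar>a i\<bar> \<le> b1"
    and c: "\<forall>k\<in>S. \<forall>k'\<in>S. \<bar>c k - c k'\<bar> \<le> D" and pos: "b1 > 0" "D > 0" "u > 0"
  shows "measure_pmf.prob (pmf_of_set {\<sigma>. \<sigma> permutes S}) {\<sigma>. u \<le> \<bar>\<Sum>i\<in>S. a i * c (\<sigma> i)\<bar>}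
    \<le> 2 * exp (- u\<^sup>2 / (2 * real (card S) * b1\<^sup>2 * D\<^sup>2))"
proof -
  let ?M = "measure_pmf.prob (pmf_of_set {\<sigma>. \<sigma> permutes S})"
  have "(\<Sum>i\<in>S. - a i) = 0" "\<forall>i\<in>S. \<bar>- a i\<bar> \<le> b1"
    using a by (simp_all add: sum_negf)
  note neg = prob_permutes_sum_ge_le[OF S this c pos]
  have "{\<sigma>. u \<le> \<bar>\<Sum>i\<in>S. a i * c (\<sigma> i)\<bar>}
      \<subseteq> {\<sigma>. u \<le> (\<Sum>i\<in>S. a i * c (\<sigma> i))} \<union> {\<sigma>. u \<le> (\<Sum>i\<in>S. - a i * c (\<sigma> i))}"
    by (auto simp: sum_negf abs_if)
  then have "?M {\<sigma>. u \<le> \<bar>\<Sum>i\<in>S. a i * c (\<sigma> i)\<bar>}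
      \<le> ?M {\<sigma>. u \<le> (\<Sum>i\<in>S. a i * c (\<sigma> i))} + ?M {\<sigma>. u \<le> (\<Sum>i\<in>S. - a i * c (\<sigma> i))}"
    by (rule order_trans[OF measure_pmf.finite_measure_mono measure_Un_le]) simp_all
  then show ?thesis
    using prob_permutes_sum_ge_le[OF S a c pos] neg by simp
qed

lemma prob_abs_S_n_ge_le:
  fixes X :: "nat \<Rightarrow> nat \<Rightarrow> real" and b1 s :: real
  assumes n: "n \<ge> 2" and X: "(\<Sum>i<n. X i j) = 0" "\<forall>i<n. \<bar>X i j\<bar> \<le> b1" and pos: "b1 > 0" "s > 0"
  shows "measure_pmf.prob (pmf_of_set {\<sigma>. \<sigma> permutes {..<n}}) {\<sigma>. s \<le> \<bar>S_n n X \<sigma> j\<bar>}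
    \<le> 2 * exp (- (n * s\<^sup>2) / (32 * b1\<^sup>2))"
proof -
  define c where "c k = 2 * real (k + 1) - (real n + 1)" for k
  define N where "N = real n * (real n - 1)"
  define u where "u = s * N / 2"
  have n1: "real n - 1 > 0"
    using n by simp
  then have N: "N > 0"
    by (simp add: N_def)
  then have u: "u > 0"
    using pos by (simp add: u_def)
  have "0 \<in> {..<n}"
    using n by simp
  then have ne: "{..<n} \<noteq> {}"
    by blast
  have c: "\<forall>k\<in>{..<n}. \<forall>k'\<in>{..<n}. \<bar>c k - c k'\<bar> \<le> 2 * (real n - 1)"
    by (auto simp: c_def abs_le_iff)
  have abs_S_n: "\<bar>S_n n X \<sigma> j\<bar> = 2 / N * \<bar>\<Sum>i<n. X i j * c (\<sigma> i)\<bar>" for \<sigma>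
    using n1 by (simp add: S_n_def c_def N_def abs_mult)
  have event: "{\<sigma>. s \<le> \<bar>S_n n X \<sigma> j\<bar>} = {\<sigma>. u \<le> \<bar>\<Sum>i<n. X i j * c (\<sigma> i)\<bar>}"
    unfolding abs_S_n using N by (auto simp: u_def field_simps)
  have scale: "(s * (K * M) / 2)\<^sup>2 / (2 * K * b1\<^sup>2 * (2 * M)\<^sup>2) = K * s\<^sup>2 / (32 * b1\<^sup>2)"
    if "K > 0" "M > 0" for K M
    using that pos by (simp add: power2_eq_square field_simps)
  have exponent: "u\<^sup>2 / (2 * real n * b1\<^sup>2 * (2 * (real n - 1))\<^sup>2) = real n * s\<^sup>2 / (32 * b1\<^sup>2)"
    unfolding u_def N_def using n1 n by (intro scale) simp_all
  have "measure_pmf.prob (pmf_of_set {\<sigma>. \<sigma> permutes {..<n}}) {\<sigma>. u \<le> \<bar>\<Sum>i<n. X i j * c (\<sigma> i)\<bar>}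
      \<le> 2 * exp (- u\<^sup>2 / (2 * real n * b1\<^sup>2 * (2 * (real n - 1))\<^sup>2))"
    using prob_permutes_abs_sum_ge_le[OF finite_lessThan ne X(1) _ c pos(1) _ u] n1 X(2) by simp
  then show ?thesis
    using event exponent by simp
qed

lemma gnorm_le_sqrt_card_mul:
  assumes "finite A" "\<forall>j\<in>A. \<bar>v j\<bar> \<le> s"
  shows "gnorm A v \<le> sqrt (card A) * s"
proof (cases "A = {}")
  case True
  then show ?thesis by (simp add: gnorm_def)
next
  case False
  then have s: "s \<ge> 0"
    using assms(2) by force
  have "(\<Sum>j\<in>A. (v j)\<^sup>2) \<le> (\<Sum>j\<in>A. s\<^sup>2)"
  proof (intro sum_mono)
    fix j assume "j \<in> A"
    then have "\<bar>v j\<bar>\<^sup>2 \<le> s\<^sup>2"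
      using assms(2) by (intro power_mono) auto
    then show "(v j)\<^sup>2 \<le> s\<^sup>2"
      by simp
  qed
  then have "gnorm A v \<le> sqrt (card A * s\<^sup>2)"
    unfolding gnorm_def by simp
  then show ?thesis
    using s by (simp add: real_sqrt_mult)
qed

lemma c_p_ge:
  assumes "l < g"
  shows "sqrt (card (G l)) / w l \<le> c_p g G w"
  using assms unfolding c_p_def by (intro Max_ge) auto

lemma c_p_pos:
  assumes "l < g" "finite (G l)" "G l \<noteq> {}" "w l > 0"
  shows "c_p g G w > 0"
proof -
  have "0 < sqrt (card (G l)) / w l"
    using assms(2-4) by (simp add: card_gt_0_iff)
  also have "\<dots> \<le> c_p g G w"
    by (rule c_p_ge[OF assms(1)])
  finally show ?thesis .
qed

lemma Psi_dual_le_c_p_mul: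
  assumes "0 < g" "\<forall>l<g. finite (G l)" "\<forall>l<g. w l > 0"
    and "\<forall>l<g. \<forall>j\<in>G l. \<bar>v j\<bar> \<le> s" "0 \<le> s"
  shows "Psi_dual g G w v \<le> c_p g G w * s"
proof -
  have "gnorm (G l) v / w l \<le> c_p g G w * s" if l: "l < g" for l
  proof -
    have "gnorm (G l) v / w l \<le> sqrt (card (G l)) * s / w l"
      using gnorm_le_sqrt_card_mul[of "G l" v s] assms l by (intro divide_right_mono) auto
    also have "\<dots> = sqrt (card (G l)) / w l * s"
      by simp
    also have "\<dots> \<le> c_p g G w * s"
      by (rule mult_right_mono[OF c_p_ge[OF l] assms(5)])
    finally show ?thesis .
  qed
  then show ?thesis
    unfolding Psi_dual_def using assms(1) by (subst Max_le_iff) auto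
qed

lemma ex_coordinate_ge_if_Psi_dual_ge:
  assumes "0 < p" "0 < g" "\<forall>l<g. G l \<subseteq> {..<p}" "\<forall>l<g. w l > 0" "c_p g G w > 0"
    and "t \<le> Psi_dual g G w v"
  shows "\<exists>j<p. t / c_p g G w \<le> \<bar>v j\<bar>"
proof -
  define s where "s = Max ((\<lambda>j. \<bar>v j\<bar>) ` {..<p})"
  have "s \<in> (\<lambda>j. \<bar>v j\<bar>) ` {..<p}"
    using assms(1) unfolding s_def by (intro Max_in) auto
  then obtain j where j: "j < p" "s = \<bar>v j\<bar>"
    by auto
  have "\<forall>l<g. \<forall>i\<in>G l. \<bar>v i\<bar> \<le> s"
    using assms(3) unfolding s_def by (auto intro: Max_ge)
  moreover have "\<forall>l<g. finite (G l)"
    using assms(3) finite_subset by blast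
  ultimately have "t \<le> c_p g G w * s"
    using Psi_dual_le_c_p_mul[of g G w v s] assms(2,4,6) j by simp
  then show ?thesis
    using assms(5) j by (auto simp: divide_le_eq mult.commute)
qed

theorem lemma3:
  fixes n p g :: nat and X :: "nat \<Rightarrow> nat \<Rightarrow> real" and \<beta>s :: "nat \<Rightarrow> real"
    and G :: "nat \<Rightarrow> nat set" and w :: "nat \<Rightarrow> real" and c0 b1 t :: real
  assumes n2: "n \<ge> 2"
    and p_pos: "p \<ge> 1"
    and groups_nonempty: "\<forall>l<g. G l \<noteq> {}"
    and groups_disjoint: "\<forall>l<g. \<forall>l'<g. l \<noteq> l' \<longrightarrow> G l \<inter> G l' = {}"
    and groups_cover: "(\<Union>l<g. G l) = {..<p}"
    and weights_pos: "\<forall>l<g. w l > 0"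
    and c0: "c0 > 1"
    and A1: "assumption_A1 n p X g G w \<beta>s c0 b1"
    and t_pos: "t > 0"
  shows "measure_pmf.prob (pmf_of_set {\<sigma>. \<sigma> permutes {..<n}})
           {\<sigma>. Psi_dual g G w (S_n n X \<sigma>) \<ge> t}
         \<le> 2 * real p * exp (- (real n * t\<^sup>2) / (32 * b1\<^sup>2 * (c_p g G w)\<^sup>2))"
proof -
  let ?M = "measure_pmf.prob (pmf_of_set {\<sigma>. \<sigma> permutes {..<n}})"
  define s where "s = t / c_p g G w"
  have X: "\<forall>j<p. (\<Sum>i<n. X i j) = 0" "\<forall>i<n. \<forall>j<p. \<bar>X i j\<bar> \<le> b1" and b1: "b1 > 0"
    using A1 unfolding assumption_A1_def by auto
  have "0 \<in> (\<Union>l<g. G l)"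
    using groups_cover p_pos by simp
  then have g: "0 < g"
    by auto
  have G: "\<forall>l<g. G l \<subseteq> {..<p}"
    using groups_cover by blast
  then have c_p: "c_p g G w > 0"
    using g groups_nonempty weights_pos by (intro c_p_pos[OF g]) (auto intro: finite_subset)
  have "{\<sigma>. t \<le> Psi_dual g G w (S_n n X \<sigma>)} \<subseteq> (\<Union>j<p. {\<sigma>. s \<le> \<bar>S_n n X \<sigma> j\<bar>})"
    using ex_coordinate_ge_if_Psi_dual_ge[OF _ g G weights_pos c_p] p_pos by (auto simp: s_def)
  then have "?M {\<sigma>. t \<le> Psi_dual g G w (S_n n X \<sigma>)} \<le> (\<Sum>j<p. ?M {\<sigma>. s \<le> \<bar>S_n n X \<sigma> j\<bar>})"
    by (rule order_trans[OF measure_pmf.finite_measure_mono measure_UNION_le]) auto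
  also have "\<dots> \<le> (\<Sum>j<p. 2 * exp (- (real n * s\<^sup>2) / (32 * b1\<^sup>2)))"
    using prob_abs_S_n_ge_le[OF n2 _ _ b1] X t_pos c_p by (intro sum_mono) (simp add: s_def)
  also have "\<dots> = 2 * real p * exp (- (real n * s\<^sup>2) / (32 * b1\<^sup>2))"
    by simp
  also have "\<dots> = 2 * real p * exp (- (real n * t\<^sup>2) / (32 * b1\<^sup>2 * (c_p g G w)\<^sup>2))"
    by (simp add: s_def power_divide)
  finally show ?thesis .
qed

end
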